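(* Every Guvab $(G,u,v,\alpha,\beta)$ satisfies exactly one of the following four conditions: (1) $\lim_{k\to\infty}W_k=1$ and $\beta<1$; (2) $\lim_{k\to\infty}W_k=\frac12$ and $\beta<1$; (3) $\lim_{k\to\infty}W_k=0$ and $\beta<1$; (4) $\beta=1$.
   Context: A Guvab is a tuple $(G,u,v,\alpha,\beta)$ where $G$ is a finite, connected, simple graph, $u,v\in V(G)$, and $\alpha,\beta\in[0,1]$ with $\alpha\le\beta$. A random walk on $G$ with starting vertex $w$ and laziness $\gamma$ is the Markov chain $R_0=w$ and, for $i\ge1$, $R_i=R_{i-1}$ with probability $\gamma$ and $R_i=t$ with probability $\frac{1-\gamma}{\deg(R_{i-1})}$ for each neighbor $t$ of $R_{i-1}$. $\mu_k$ is the distribution after $k$ steps of the walk from $u$ with laziness $\alpha$, $\nu_k$ that of the walk from $v$ with laziness $\beta$, and $W_k=W(\mu_k,\nu_k)$ is the Wasserstein ($L^1$ optimal transport) distance with respect to the graph distance: the minimum over transportation plans (nonnegative $T$ on $V(G)\times V(G)$ with marginals $\mu_k,\nu_k$) of $\sum d(w_1,w_2)T(w_1,w_2)$. (Implicit in the statement: when $\beta<1$ the limit $\lim_k W_k$ exists.) *)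

theory Defs
  imports "HOL-Analysis.Analysis"
begin

definition simple_graph :: "'a set \<Rightarrow> ('a \<Rightarrow> 'a \<Rightarrow> bool) \<Rightarrow> bool" where
  "simple_graph V E \<longleftrightarrow> finite V \<and> V \<noteq> {} \<and>
     (\<forall>x y. E x y \<longrightarrow> x \<in> V \<and> y \<in> V) \<and>
     (\<forall>x. \<not> E x x) \<and> (\<forall>x y. E x y \<longrightarrow> E y x)"

definition connected_graph :: "'a set \<Rightarrow> ('a \<Rightarrow> 'a \<Rightarrow> bool) \<Rightarrow> bool" where
  "connected_graph V E \<longleftrightarrow> (\<forall>x\<in>V. \<forall>y\<in>V. \<exists>n. (E ^^ n) x y)"

definition gdist :: "('a \<Rightarrow> 'a \<Rightarrow> bool) \<Rightarrow> 'a \<Rightarrow> 'a \<Rightarrow> nat" where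
  "gdist E x y = (LEAST n. (E ^^ n) x y)"

definition deg :: "'a set \<Rightarrow> ('a \<Rightarrow> 'a \<Rightarrow> bool) \<Rightarrow> 'a \<Rightarrow> nat" where
  "deg V E x = card {y\<in>V. E x y}"

text \<open>One step of the lazy random walk with laziness g acting on a distribution.
  (At an isolated vertex -- only possible in the one-vertex graph -- the walk stays put.)\<close>
definition walk_step :: "'a set \<Rightarrow> ('a \<Rightarrow> 'a \<Rightarrow> bool) \<Rightarrow> real \<Rightarrow> ('a \<Rightarrow> real) \<Rightarrow> ('a \<Rightarrow> real)" where
  "walk_step V E g mu = (\<lambda>w.
     (if deg V E w = 0 then mu w else g * mu w) +
     (\<Sum>x\<in>V. if E x w then (1 - g) * mu x / real (deg V E x) else 0))"

primrec walk_dist :: "'a set \<Rightarrow> ('a \<Rightarrow> 'a \<Rightarrow> bool) \<Rightarrow> real \<Rightarrow> 'a \<Rightarrow> nat \<Rightarrow> ('a \<Rightarrow> real)" where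
  "walk_dist V E g w 0 = (\<lambda>x. if x = w then 1 else 0)"
| "walk_dist V E g w (Suc k) = walk_step V E g (walk_dist V E g w k)"

definition transport_plan :: "'a set \<Rightarrow> ('a \<Rightarrow> real) \<Rightarrow> ('a \<Rightarrow> real) \<Rightarrow> ('a \<times> 'a \<Rightarrow> real) \<Rightarrow> bool" where
  "transport_plan V mu nu T \<longleftrightarrow>
     (\<forall>x\<in>V. \<forall>y\<in>V. T (x, y) \<ge> 0) \<and>
     (\<forall>x\<in>V. (\<Sum>y\<in>V. T (x, y)) = mu x) \<and>
     (\<forall>y\<in>V. (\<Sum>x\<in>V. T (x, y)) = nu y)"

definition wasserstein :: "'a set \<Rightarrow> ('a \<Rightarrow> 'a \<Rightarrow> bool) \<Rightarrow> ('a \<Rightarrow> real) \<Rightarrow> ('a \<Rightarrow> real) \<Rightarrow> real" where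
  "wasserstein V E mu nu = Inf {(\<Sum>p\<in>V \<times> V. real (gdist E (fst p) (snd p)) * T p) | T. transport_plan V mu nu T}"

end

theory Submission
  imports Defs
begin

(* For laziness below 1 the walk started at w converges in l1 to the stationary distribution
   pi(x) = deg x / 2|E| by Doeblin's contraction argument, with one exception: the non-lazy walk
   on a bipartite graph approaches instead 2 pi restricted to the side of the bipartition that
   it occupies at time k. Transporting mass costs at most diam times the l1 distance, and
   1-Lipschitz potentials bound the cost from below, so W_k tends to the transport distance
   between the two limits: 0 if the walks approach the same limit, 1/2 between pi and a
   one-sided 2 pi (half of the mass crosses one edge), and 1 between the two sides (all mass
   crosses one edge). On the one-vertex graph W_k = 0, and uniqueness of limits makes the four
   cases exclusive. *)

lemma relpowp_sym:
  assumes sym: "\<And>x y. E x y \<Longrightarrow> E y x" and "(E ^^ n) x y"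
  shows "(E ^^ n) y x"
  using assms(2)
proof (induction n arbitrary: y)
  case 0
  then show ?case by simp
next
  case (Suc n)
  then obtain z where "(E ^^ n) x z" "E z y" by (auto elim: relpowp_Suc_E)
  then show ?case using Suc.IH sym by (meson relpowp_Suc_I2)
qed

lemma gdist_refl: "gdist E x x = 0"
  unfolding gdist_def by (rule Least_eq_0) simp

lemma sum_bounded_weights_le_l1:
  fixes f a b :: "'a \<Rightarrow> real"
  assumes "\<And>x. x \<in> A \<Longrightarrow> \<bar>f x\<bar> \<le> 1"
  shows "(\<Sum>x\<in>A. f x * a x) - (\<Sum>x\<in>A. f x * b x) \<le> (\<Sum>x\<in>A. \<bar>a x - b x\<bar>)"
proof -
  have "(\<Sum>x\<in>A. f x * a x) - (\<Sum>x\<in>A. f x * b x) = (\<Sum>x\<in>A. f x * (a x - b x))"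
    by (simp add: sum_subtractf[symmetric] right_diff_distrib)
  also have "\<dots> \<le> (\<Sum>x\<in>A. \<bar>a x - b x\<bar>)"
  proof (rule sum_mono)
    fix x assume "x \<in> A"
    have "f x * (a x - b x) \<le> \<bar>f x\<bar> * \<bar>a x - b x\<bar>" by (metis abs_ge_self abs_mult)
    also have "\<dots> \<le> \<bar>a x - b x\<bar>" using assms[OF \<open>x \<in> A\<close>] by (simp add: mult_left_le_one_le)
    finally show "f x * (a x - b x) \<le> \<bar>a x - b x\<bar>" .
  qed
  finally show ?thesis .
qed

section \<open>Doeblin contraction\<close>

lemma finite_pos_lower_bound:
  fixes f :: "'a \<Rightarrow> real"
  assumes "finite A"
  shows "\<exists>\<delta>>0. \<forall>a\<in>A. 0 < f a \<longrightarrow> \<delta> \<le> f a"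
  using assms by (intro exI[of _ "Min (insert 1 (f ` {a\<in>A. 0 < f a}))"]) auto

lemma tendsto_0_if_contracting:
  fixes e :: "nat \<Rightarrow> real"
  assumes nonneg: "\<And>k. 0 \<le> e k" and decreasing: "\<And>k. e (Suc k) \<le> e k"
    and contracting: "\<And>k. e (k + N) \<le> c * e k" and "c < 1"
  shows "e \<longlonglongrightarrow> 0"
proof -
  obtain L where L: "e \<longlonglongrightarrow> L" "\<And>k. L \<le> e k"
    using decseq_convergent[of e] decreasing nonneg by (metis decseq_SucI)
  have "(\<lambda>k. e (k + N)) \<longlonglongrightarrow> L"
    using L(1) by (rule LIMSEQ_ignore_initial_segment)
  moreover have "(\<lambda>k. c * e k) \<longlonglongrightarrow> c * L"
    using L(1) by (rule tendsto_mult_left)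
  ultimately have "L \<le> c * L"
    using contracting by (intro LIMSEQ_le) auto
  moreover have "0 \<le> L"
    using L(1) nonneg by (intro LIMSEQ_le_const) auto
  ultimately have "L = 0"
    using \<open>c < 1\<close> by (smt (verit) mult_less_cancel_right2)
  then show ?thesis using L(1) by simp
qed

text \<open>Doeblin's argument: since \<open>h\<close> sums to zero, replacing \<open>q x\<close> by \<open>q x - \<delta>\<close>
  does not change \<open>\<Sum>x. h x * q x\<close>, and on the support of \<open>h\<close> the shifted weights stay
  nonnegative.\<close>
lemma abs_sum_balanced_le:
  fixes h q :: "'a \<Rightarrow> real"
  assumes balanced: "(\<Sum>x\<in>V. h x) = 0" and minorized: "\<And>x. x \<in> V \<Longrightarrow> h x \<noteq> 0 \<Longrightarrow> \<delta> \<le> q x"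
  shows "\<bar>\<Sum>x\<in>V. h x * q x\<bar> \<le> (\<Sum>x\<in>V. \<bar>h x\<bar> * q x) - \<delta> * (\<Sum>x\<in>V. \<bar>h x\<bar>)"
proof -
  have "(\<Sum>x\<in>V. h x * q x) = (\<Sum>x\<in>V. h x * (q x - \<delta>)) + \<delta> * (\<Sum>x\<in>V. h x)"
    by (simp add: sum_distrib_left sum.distrib[symmetric] algebra_simps)
  then have "\<bar>\<Sum>x\<in>V. h x * q x\<bar> \<le> (\<Sum>x\<in>V. \<bar>h x * (q x - \<delta>)\<bar>)"
    using balanced by simp
  also have "\<dots> = (\<Sum>x\<in>V. \<bar>h x\<bar> * q x - \<delta> * \<bar>h x\<bar>)"
  proof (rule sum.cong)
    fix x assume "x \<in> V"
    show "\<bar>h x * (q x - \<delta>)\<bar> = \<bar>h x\<bar> * q x - \<delta> * \<bar>h x\<bar>"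
    proof (cases "h x = 0")
      case False
      then have "0 \<le> q x - \<delta>" using minorized \<open>x \<in> V\<close> by simp
      then have "\<bar>h x * (q x - \<delta>)\<bar> = \<bar>h x\<bar> * (q x - \<delta>)" by (simp add: abs_mult)
      then show ?thesis by (simp add: algebra_simps)
    qed simp
  qed simp
  also have "\<dots> = (\<Sum>x\<in>V. \<bar>h x\<bar> * q x) - \<delta> * (\<Sum>x\<in>V. \<bar>h x\<bar>)"
    by (simp add: sum_subtractf sum_distrib_left)
  finally show ?thesis .
qed

lemma l1_contraction:
  fixes h :: "'a \<Rightarrow> real" and Q :: "'a \<Rightarrow> 'a \<Rightarrow> real"
  assumes "finite V" and balanced: "(\<Sum>x\<in>V. h x) = 0" and "z \<in> V"
    and minorized: "\<And>x. x \<in> V \<Longrightarrow> h x \<noteq> 0 \<Longrightarrow> \<delta> \<le> Q x z"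
    and Q_nonneg: "\<And>x w. x \<in> V \<Longrightarrow> w \<in> V \<Longrightarrow> 0 \<le> Q x w"
    and Q_stochastic: "\<And>x. x \<in> V \<Longrightarrow> (\<Sum>w\<in>V. Q x w) = 1"
  shows "(\<Sum>w\<in>V. \<bar>\<Sum>x\<in>V. h x * Q x w\<bar>) \<le> (1 - \<delta>) * (\<Sum>x\<in>V. \<bar>h x\<bar>)"
proof -
  let ?H = "\<Sum>x\<in>V. \<bar>h x\<bar>"
  have column: "\<bar>\<Sum>x\<in>V. h x * Q x w\<bar> \<le> (\<Sum>x\<in>V. \<bar>h x\<bar> * Q x w)" if "w \<in> V" for w
  proof -
    have "\<bar>\<Sum>x\<in>V. h x * Q x w\<bar> \<le> (\<Sum>x\<in>V. \<bar>h x * Q x w\<bar>)" by (rule sum_abs)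
    also have "\<dots> = (\<Sum>x\<in>V. \<bar>h x\<bar> * Q x w)"
      using Q_nonneg that by (intro sum.cong) (auto simp: abs_mult)
    finally show ?thesis .
  qed
  have "(\<Sum>w\<in>V. \<bar>\<Sum>x\<in>V. h x * Q x w\<bar>)
      \<le> (\<Sum>w\<in>V. (\<Sum>x\<in>V. \<bar>h x\<bar> * Q x w) - (if w = z then \<delta> * ?H else 0))"
    using abs_sum_balanced_le[OF balanced, of \<delta> "\<lambda>x. Q x z"] minorized column
    by (intro sum_mono) auto
  also have "\<dots> = (\<Sum>w\<in>V. \<Sum>x\<in>V. \<bar>h x\<bar> * Q x w) - \<delta> * ?H"
    using \<open>z \<in> V\<close> \<open>finite V\<close> by (simp add: sum_subtractf)
  also have "(\<Sum>w\<in>V. \<Sum>x\<in>V. \<bar>h x\<bar> * Q x w) = (\<Sum>x\<in>V. \<Sum>w\<in>V. \<bar>h x\<bar> * Q x w)"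
    by (rule sum.swap)
  also have "\<dots> = ?H"
    using Q_stochastic by (simp add: sum_distrib_left[symmetric])
  finally show ?thesis by (simp add: algebra_simps)
qed

section \<open>Graph distance and lazy random walks\<close>

text \<open>Positive degrees exclude only the one-vertex graph, which is treated at the end.\<close>
locale nontrivial_connected_graph =
  fixes V :: "'a set" and E :: "'a \<Rightarrow> 'a \<Rightarrow> bool"
  assumes simple: "simple_graph V E" and connected: "connected_graph V E"
    and deg_pos: "\<And>x. x \<in> V \<Longrightarrow> 0 < deg V E x"
begin

abbreviation dg :: "'a \<Rightarrow> nat" where "dg x \<equiv> deg V E x"

lemma finite_V: "finite V" and V_nonempty: "V \<noteq> {}"
  and edge_in_V: "E x y \<Longrightarrow> x \<in> V \<and> y \<in> V"
  and edge_irrefl: "\<not> E x x" and edge_sym: "E x y \<Longrightarrow> E y x"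
  using simple unfolding simple_graph_def by auto

lemma reachable: "x \<in> V \<Longrightarrow> y \<in> V \<Longrightarrow> \<exists>n. (E ^^ n) x y"
  using connected unfolding connected_graph_def by auto

lemma walk_sym: "(E ^^ n) x y \<Longrightarrow> (E ^^ n) y x"
  using relpowp_sym[of E] edge_sym by blast

lemma gdist_walk: "x \<in> V \<Longrightarrow> y \<in> V \<Longrightarrow> (E ^^ gdist E x y) x y"
  unfolding gdist_def using reachable by (metis LeastI_ex)

lemma gdist_le: "(E ^^ n) x y \<Longrightarrow> gdist E x y \<le> n"
  unfolding gdist_def by (rule Least_le)

lemma gdist_ge_1: "x \<noteq> y \<Longrightarrow> x \<in> V \<Longrightarrow> y \<in> V \<Longrightarrow> 1 \<le> gdist E x y"
  using gdist_walk[of x y] by (cases "gdist E x y") auto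

lemma gdist_edge: "E x y \<Longrightarrow> gdist E x y = 1"
  using gdist_le[of 1 x y] gdist_ge_1[of x y] edge_in_V[of x y] edge_irrefl[of x] by force

lemma gdist_triangle:
  "x \<in> V \<Longrightarrow> y \<in> V \<Longrightarrow> z \<in> V \<Longrightarrow> gdist E x z \<le> gdist E x y + gdist E y z"
  using gdist_le[OF relpowp_trans[OF gdist_walk gdist_walk]] by blast

definition diam :: nat where
  "diam = Max ((\<lambda>(x, y). gdist E x y) ` (V \<times> V))"

lemma gdist_le_diam: "x \<in> V \<Longrightarrow> y \<in> V \<Longrightarrow> gdist E x y \<le> diam"
  unfolding diam_def using finite_V by (intro Max_ge) auto

lemma sum_if_edge: "(\<Sum>y\<in>V. if E x y then c else 0) = real (dg x) * c"
  using sum.inter_filter[of V "\<lambda>_. c" "E x", symmetric] finite_V by (simp add: deg_def)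

lemma sum_if_edge': "(\<Sum>x\<in>V. if E x y then c else 0) = real (dg y) * c"
proof -
  have "(\<Sum>x\<in>V. if E x y then c else 0) = (\<Sum>x\<in>V. if E y x then c else 0)"
    by (rule sum.cong) (auto dest: edge_sym)
  then show ?thesis by (simp add: sum_if_edge)
qed

lemma walk_step_eq:
  "w \<in> V \<Longrightarrow> walk_step V E g \<mu> w
     = g * \<mu> w + (\<Sum>x\<in>V. if E x w then (1 - g) * \<mu> x / real (dg x) else 0)"
  using deg_pos[of w] by (simp add: walk_step_def)

lemma deg_outside:
  assumes "x \<notin> V"
  shows "dg x = 0"
proof -
  have "{y \<in> V. E x y} = {}" using assms edge_in_V by auto
  then show ?thesis unfolding deg_def by (metis card.empty)
qed

lemma walk_step_0_eq:
  "w \<in> V \<Longrightarrow> walk_step V E 0 \<mu> w = (\<Sum>x\<in>V. if E x w then \<mu> x / real (dg x) else 0)"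
  by (simp add: walk_step_eq cong: if_cong)

lemma walk_step_outside: "w \<notin> V \<Longrightarrow> walk_step V E g \<mu> w = \<mu> w"
  using edge_in_V by (auto simp: walk_step_def deg_outside intro!: sum.neutral)

lemma walk_step_cong:
  "w \<in> V \<Longrightarrow> (\<And>x. x \<in> V \<Longrightarrow> \<mu> x = \<mu>' x) \<Longrightarrow> walk_step V E g \<mu> w = walk_step V E g \<mu>' w"
  by (auto simp: walk_step_eq intro!: sum.cong)

lemma walk_step_diff:
  "walk_step V E g (\<lambda>x. \<mu> x - \<nu> x) w = walk_step V E g \<mu> w - walk_step V E g \<nu> w"
proof -
  have "(\<Sum>x\<in>V. if E x w then (1 - g) * (\<mu> x - \<nu> x) / real (dg x) else 0)
     = (\<Sum>x\<in>V. if E x w then (1 - g) * \<mu> x / real (dg x) else 0)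
       - (\<Sum>x\<in>V. if E x w then (1 - g) * \<nu> x / real (dg x) else 0)"
    by (simp add: sum_subtractf[symmetric] diff_divide_distrib right_diff_distrib if_distrib
        cong: if_cong)
  then show ?thesis by (simp add: walk_step_def algebra_simps)
qed

lemma walk_step_sum:
  assumes "w \<in> V"
  shows "walk_step V E g (\<lambda>y. \<Sum>x\<in>V. c x * h x y) w = (\<Sum>x\<in>V. c x * walk_step V E g (h x) w)"
proof -
  have "(\<Sum>y\<in>V. if E y w then (1 - g) * (\<Sum>x\<in>V. c x * h x y) / real (dg y) else 0)
      = (\<Sum>y\<in>V. \<Sum>x\<in>V. c x * (if E y w then (1 - g) * h x y / real (dg y) else 0))"
    by (rule sum.cong) (auto simp: sum_distrib_left sum_divide_distrib algebra_simps)
  also have "\<dots> = (\<Sum>x\<in>V. \<Sum>y\<in>V. c x * (if E y w then (1 - g) * h x y / real (dg y) else 0))"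
    by (rule sum.swap)
  finally show ?thesis
    using assms by (simp add: walk_step_eq sum_distrib_left sum.distrib algebra_simps)
qed

lemma sum_walk_step: "(\<Sum>w\<in>V. walk_step V E g \<mu> w) = (\<Sum>x\<in>V. \<mu> x)"
proof -
  have "(\<Sum>w\<in>V. walk_step V E g \<mu> w) = (\<Sum>w\<in>V. g * \<mu> w)
      + (\<Sum>w\<in>V. \<Sum>x\<in>V. if E x w then (1 - g) * \<mu> x / real (dg x) else 0)"
    by (simp add: walk_step_eq sum.distrib)
  also have "(\<Sum>w\<in>V. \<Sum>x\<in>V. if E x w then (1 - g) * \<mu> x / real (dg x) else 0)
      = (\<Sum>x\<in>V. \<Sum>w\<in>V. if E x w then (1 - g) * \<mu> x / real (dg x) else 0)"
    by (rule sum.swap)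
  also have "\<dots> = (\<Sum>x\<in>V. (1 - g) * \<mu> x)"
    using deg_pos by (intro sum.cong) (auto simp: sum_if_edge)
  also have "(\<Sum>w\<in>V. g * \<mu> w) + (\<Sum>x\<in>V. (1 - g) * \<mu> x) = (\<Sum>x\<in>V. \<mu> x)"
    by (simp add: sum.distrib[symmetric] algebra_simps)
  finally show ?thesis .
qed

lemma walk_step_nonneg:
  "0 \<le> g \<Longrightarrow> g \<le> 1 \<Longrightarrow> (\<And>x. 0 \<le> \<mu> x) \<Longrightarrow> 0 \<le> walk_step V E g \<mu> w"
  unfolding walk_step_def by (auto intro!: add_nonneg_nonneg sum_nonneg divide_nonneg_nonneg)

lemma walk_step_ge_stay:
  assumes "0 \<le> g" "g \<le> 1" "\<And>x. 0 \<le> \<mu> x" "w \<in> V"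
  shows "g * \<mu> w \<le> walk_step V E g \<mu> w"
  using assms by (auto simp: walk_step_eq intro!: sum_nonneg divide_nonneg_nonneg)

lemma walk_step_ge_edge:
  assumes "0 \<le> g" "g \<le> 1" "\<And>x. 0 \<le> \<mu> x" "E y w"
  shows "(1 - g) * \<mu> y / real (dg y) \<le> walk_step V E g \<mu> w"
proof -
  have "(if E y w then (1 - g) * \<mu> y / real (dg y) else 0)
      \<le> (\<Sum>x\<in>V. if E x w then (1 - g) * \<mu> x / real (dg x) else 0)"
    by (rule member_le_sum) (use assms finite_V edge_in_V in \<open>auto intro!: divide_nonneg_nonneg\<close>)
  moreover have "0 \<le> g * \<mu> w" using assms by simp
  ultimately show ?thesis using assms(4) edge_in_V[OF \<open>E y w\<close>] by (simp add: walk_step_eq)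
qed

lemma walk_dist_nonneg: "0 \<le> g \<Longrightarrow> g \<le> 1 \<Longrightarrow> 0 \<le> walk_dist V E g x k w"
  by (induction k arbitrary: w) (auto intro: walk_step_nonneg)

lemma walk_dist_outside: "x \<in> V \<Longrightarrow> w \<notin> V \<Longrightarrow> walk_dist V E g x k w = 0"
  by (induction k) (auto simp: walk_step_outside)

lemma sum_walk_dist: "x \<in> V \<Longrightarrow> (\<Sum>w\<in>V. walk_dist V E g x k w) = 1"
  by (induction k) (auto simp: sum_walk_step finite_V)

lemma walk_dist_pos_walk:
  assumes "0 \<le> g" "g < 1" "x \<in> V" "(E ^^ n) x z"
  shows "0 < walk_dist V E g x n z"
  using assms(4)
proof (induction n arbitrary: z)
  case 0
  then show ?case by simp
next
  case (Suc n)
  then obtain y where "(E ^^ n) x y" "E y z" by (auto elim: relpowp_Suc_E)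
  then have "0 < (1 - g) * walk_dist V E g x n y / real (dg y)"
    using Suc.IH assms deg_pos edge_in_V by simp
  also have "\<dots> \<le> walk_dist V E g x (Suc n) z"
    using assms \<open>E y z\<close> by (simp add: walk_step_ge_edge walk_dist_nonneg)
  finally show ?case .
qed

lemma walk_dist_pos_lazy:
  assumes "0 < g" "g < 1" "x \<in> V" "z \<in> V"
  shows "0 < walk_dist V E g x diam z"
proof -
  have "0 < walk_dist V E g x (gdist E x z + m) z" for m
  proof (induction m)
    case 0
    then show ?case using assms gdist_walk walk_dist_pos_walk by simp
  next
    case (Suc m)
    then have "0 < g * walk_dist V E g x (gdist E x z + m) z" using assms by simp
    also have "\<dots> \<le> walk_dist V E g x (gdist E x z + Suc m) z"
      using assms by (simp add: walk_step_ge_stay walk_dist_nonneg)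
    finally show ?case .
  qed
  from this[of "diam - gdist E x z"] show ?thesis using gdist_le_diam assms by simp
qed

lemma walk_dist_0_support: "x \<in> V \<Longrightarrow> walk_dist V E 0 x n z \<noteq> 0 \<Longrightarrow> (E ^^ n) x z"
proof (induction n arbitrary: z)
  case 0
  then show ?case by (auto split: if_splits)
next
  case (Suc n)
  then have "z \<in> V" using walk_dist_outside by blast
  then have "(\<Sum>y\<in>V. if E y z then walk_dist V E 0 x n y / real (dg y) else 0) \<noteq> 0"
    using Suc.prems(2) by (simp add: walk_step_0_eq)
  then obtain y where "E y z" "walk_dist V E 0 x n y \<noteq> 0"
    by (rule sum.not_neutral_contains_not_neutral) (auto split: if_splits)
  then show ?case using Suc.IH Suc.prems(1) by (meson relpowp_Suc_I)
qed

lemma walk_driven_shift: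
  assumes drive: "\<And>k w. w \<in> V \<Longrightarrow> f (Suc k) w = walk_step V E g (f k) w"
  shows "w \<in> V \<Longrightarrow> f (k + N) w = (\<Sum>x\<in>V. f k x * walk_dist V E g x N w)"
proof (induction N arbitrary: w)
  case 0
  then show ?case using finite_V by (simp add: if_distrib cong: if_cong)
next
  case (Suc N)
  have "f (k + Suc N) w = walk_step V E g (f (k + N)) w"
    using drive[OF Suc.prems] by simp
  also have "\<dots> = walk_step V E g (\<lambda>y. \<Sum>x\<in>V. f k x * walk_dist V E g x N y) w"
    by (rule walk_step_cong[OF Suc.prems Suc.IH])
  also have "\<dots> = (\<Sum>x\<in>V. f k x * walk_dist V E g x (Suc N) w)"
    using walk_step_sum[OF Suc.prems] by simp
  finally show ?case .
qed

lemma walk_driven_tendsto_0: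
  assumes g: "0 \<le> g" "g \<le> 1"
    and drive: "\<And>k w. w \<in> V \<Longrightarrow> f (Suc k) w = walk_step V E g (f k) w"
    and balanced: "\<And>k. (\<Sum>x\<in>V. f k x) = 0"
    and doeblin: "\<And>k. \<exists>z\<in>V. \<forall>x\<in>V. f k x \<noteq> 0 \<longrightarrow> 0 < walk_dist V E g x N z"
  shows "(\<lambda>k. \<Sum>x\<in>V. \<bar>f k x\<bar>) \<longlonglongrightarrow> 0"
proof -
  obtain \<delta> where "0 < \<delta>" and \<delta>:
    "\<And>x z. (x, z) \<in> V \<times> V \<Longrightarrow> 0 < walk_dist V E g x N z \<Longrightarrow> \<delta> \<le> walk_dist V E g x N z"
    using finite_pos_lower_bound[of "V \<times> V" "\<lambda>(x, z). walk_dist V E g x N z"] finite_V by auto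
  have shift: "(\<Sum>w\<in>V. \<bar>f (k + M) w\<bar>) = (\<Sum>w\<in>V. \<bar>\<Sum>x\<in>V. f k x * walk_dist V E g x M w\<bar>)" for k M
    using walk_driven_shift[where f = f and g = g, OF drive] by simp
  have contraction: "(\<Sum>w\<in>V. \<bar>f (k + M) w\<bar>) \<le> (1 - \<epsilon>) * (\<Sum>x\<in>V. \<bar>f k x\<bar>)"
    if "z \<in> V" "\<And>x. x \<in> V \<Longrightarrow> f k x \<noteq> 0 \<Longrightarrow> \<epsilon> \<le> walk_dist V E g x M z" for k M z \<epsilon>
    unfolding shift using that g finite_V balanced walk_dist_nonneg sum_walk_dist
    by (intro l1_contraction) auto
  obtain z0 where "z0 \<in> V" using V_nonempty by blast
  show ?thesis
  proof (rule tendsto_0_if_contracting[where c = "1 - \<delta>"])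
    show "(\<Sum>w\<in>V. \<bar>f (Suc k) w\<bar>) \<le> (\<Sum>x\<in>V. \<bar>f k x\<bar>)" for k
      using contraction[where z = z0 and k = k and M = 1 and \<epsilon> = 0] \<open>z0 \<in> V\<close>
        walk_dist_nonneg[OF g, of _ 1 z0]
      by (simp del: walk_dist.simps)
    show "(\<Sum>w\<in>V. \<bar>f (k + N) w\<bar>) \<le> (1 - \<delta>) * (\<Sum>x\<in>V. \<bar>f k x\<bar>)" for k
    proof -
      obtain z where "z \<in> V" "\<forall>x\<in>V. f k x \<noteq> 0 \<longrightarrow> 0 < walk_dist V E g x N z"
        using doeblin by blast
      then show ?thesis using \<delta> by (intro contraction) auto
    qed
    show "1 - \<delta> < 1" using \<open>0 < \<delta>\<close> by simp
  qed (auto intro: sum_nonneg)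
qed

section \<open>The stationary distribution\<close>

definition degree_sum :: real where
  "degree_sum = (\<Sum>x\<in>V. real (dg x))"

definition stationary :: "'a \<Rightarrow> real" where
  "stationary x = real (dg x) / degree_sum"

definition distribution :: "('a \<Rightarrow> real) \<Rightarrow> bool" where
  "distribution \<mu> \<longleftrightarrow> (\<forall>x\<in>V. 0 \<le> \<mu> x) \<and> (\<Sum>x\<in>V. \<mu> x) = 1"

lemma degree_sum_pos: "0 < degree_sum"
  unfolding degree_sum_def using finite_V V_nonempty deg_pos by (intro sum_pos) auto

lemma stationary_nonneg: "0 \<le> stationary x"
  unfolding stationary_def using degree_sum_pos by simp

lemma distribution_stationary: "distribution stationary"
  unfolding distribution_def stationary_def degree_sum_def
  using degree_sum_pos stationary_nonneg by (simp add: sum_divide_distrib[symmetric] degree_sum_def)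

lemma distribution_walk_dist: "0 \<le> g \<Longrightarrow> g \<le> 1 \<Longrightarrow> x \<in> V \<Longrightarrow> distribution (walk_dist V E g x k)"
  unfolding distribution_def by (simp add: walk_dist_nonneg sum_walk_dist)

lemma stationary_div_deg: "E x y \<Longrightarrow> c * stationary x / real (dg x) = c / degree_sum"
  using deg_pos edge_in_V by (simp add: stationary_def)

lemma walk_step_stationary: "w \<in> V \<Longrightarrow> walk_step V E g stationary w = stationary w"
proof -
  assume "w \<in> V"
  have "(\<Sum>x\<in>V. if E x w then (1 - g) * stationary x / real (dg x) else 0)
      = (\<Sum>x\<in>V. if E x w then (1 - g) / degree_sum else 0)"
    by (rule sum.cong) (auto simp: stationary_div_deg)
  also have "\<dots> = real (dg w) * ((1 - g) / degree_sum)" by (rule sum_if_edge')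
  finally show ?thesis
    using \<open>w \<in> V\<close> degree_sum_pos by (simp add: walk_step_eq stationary_def field_simps)
qed

section \<open>Bipartite graphs\<close>

definition even_walk :: "'a \<Rightarrow> 'a \<Rightarrow> bool" where
  "even_walk x y \<longleftrightarrow> (\<exists>n. (E ^^ n) x y \<and> even n)"

text \<open>For a connected graph this is equivalent to the absence of odd cycles.\<close>
definition bipartite :: bool where
  "bipartite \<longleftrightarrow> (\<exists>x\<in>V. \<exists>y\<in>V. \<not> even_walk x y)"

text \<open>In a bipartite graph, \<open>walk_side w k\<close> is the side of the bipartition that carries the
  non-lazy walk from \<open>w\<close> at time \<open>k\<close>.\<close>
definition walk_side :: "'a \<Rightarrow> nat \<Rightarrow> 'a \<Rightarrow> bool" where
  "walk_side w k x \<longleftrightarrow> (\<exists>n. (E ^^ n) w x \<and> even (n + k))"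

lemma walk_side_Suc_Suc [simp]: "walk_side w (Suc (Suc k)) = walk_side w k"
  unfolding walk_side_def by simp

lemma walk_side_edge: "E x y \<Longrightarrow> walk_side w k x \<Longrightarrow> walk_side w (Suc k) y"
  unfolding walk_side_def by (metis relpowp_Suc_I even_Suc add_Suc add_Suc_right)

lemma walk_side_cases: "w \<in> V \<Longrightarrow> x \<in> V \<Longrightarrow> walk_side w k x \<or> walk_side w (Suc k) x"
  unfolding walk_side_def using reachable by (metis add_Suc_right even_Suc)

lemma walk_side_even_walk: "walk_side w k x \<Longrightarrow> walk_side w k y \<Longrightarrow> even_walk x y"
  unfolding walk_side_def even_walk_def
  by (metis relpowp_trans walk_sym even_add)

lemma walk_side_Suc:
  assumes "bipartite" "w \<in> V" "x \<in> V"
  shows "walk_side w (Suc k) x \<longleftrightarrow> \<not> walk_side w k x"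
proof -
  have "\<not> (walk_side w k x \<and> walk_side w (Suc k) x)"
  proof
    assume "walk_side w k x \<and> walk_side w (Suc k) x"
    then obtain m n where mn: "(E ^^ m) w x" "(E ^^ n) w x" "odd (m + n)"
      unfolding walk_side_def by (metis even_add even_Suc add_Suc_right)
    have "even_walk a b" if ab: "a \<in> V" "b \<in> V" for a b
    proof -
      obtain p where p: "(E ^^ p) a w" using reachable ab \<open>w \<in> V\<close> by blast
      obtain q where q: "(E ^^ q) w b" using reachable ab \<open>w \<in> V\<close> by blast
      have "(E ^^ (p + q)) a b" using relpowp_trans[OF p q] .
      moreover have "(E ^^ (p + m + n + q)) a b"
        using relpowp_trans[OF relpowp_trans[OF relpowp_trans[OF p mn(1)] walk_sym[OF mn(2)]] q] .
      moreover have "even (p + q) \<or> even (p + m + n + q)" using mn(3) by auto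
      ultimately show ?thesis unfolding even_walk_def by blast
    qed
    then show False using \<open>bipartite\<close> unfolding bipartite_def by blast
  qed
  then show ?thesis using walk_side_cases[OF assms(2,3), of k] by blast
qed

lemma walk_side_edge_iff:
  assumes "bipartite" "w \<in> V" "E x y"
  shows "walk_side w k y \<longleftrightarrow> \<not> walk_side w k x"
proof (cases "walk_side w k x")
  case True
  then show ?thesis using walk_side_edge[OF \<open>E x y\<close>] walk_side_Suc assms edge_in_V by blast
next
  case False
  then have "walk_side w (Suc k) x" using walk_side_Suc assms edge_in_V by blast
  then show ?thesis using walk_side_edge[OF \<open>E x y\<close>] False by fastforce
qed

lemma walk_dist_0_walk_side: "w \<in> V \<Longrightarrow> walk_dist V E 0 w k x \<noteq> 0 \<Longrightarrow> walk_side w k x"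
  unfolding walk_side_def using walk_dist_0_support by fastforce

lemma walk_side_parity: "even (j + k) \<Longrightarrow> walk_side w j x \<longleftrightarrow> walk_side w k x"
  unfolding walk_side_def by auto

lemma walk_side_start: "(E ^^ m) u v \<Longrightarrow> walk_side v k x \<Longrightarrow> walk_side u (m + k) x"
  unfolding walk_side_def by (auto intro: relpowp_trans)

lemma walk_side_even_walk_start:
  assumes "even_walk u v"
  shows "walk_side v k x \<longleftrightarrow> walk_side u k x"
proof -
  obtain m where uv: "(E ^^ m) u v" and vu: "(E ^^ m) v u" and "even m"
    using assms walk_sym unfolding even_walk_def by blast
  then have parity: "walk_side w (m + k) x \<longleftrightarrow> walk_side w k x" for w
    by (intro walk_side_parity) simp
  show ?thesis using walk_side_start[OF uv] walk_side_start[OF vu] parity by blast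
qed

lemma walk_side_odd_walk_start:
  assumes "u \<in> V" "v \<in> V" "\<not> even_walk u v"
  shows "walk_side v k x \<longleftrightarrow> walk_side u (Suc k) x"
proof -
  obtain m where uv: "(E ^^ m) u v" and vu: "(E ^^ m) v u" and "odd m"
    using reachable assms walk_sym unfolding even_walk_def by blast
  then have "walk_side u (m + k) x \<longleftrightarrow> walk_side u (Suc k) x"
    and "walk_side v (m + Suc k) x \<longleftrightarrow> walk_side v k x"
    by (intro walk_side_parity; simp)+
  then show ?thesis using walk_side_start[OF uv] walk_side_start[OF vu] by blast
qed

lemma walk_pad:
  assumes "(E ^^ n) x z" "z \<in> V"
  shows "(E ^^ (n + 2 * m)) x z"
proof -
  obtain y where "E z y" using deg_pos[OF \<open>z \<in> V\<close>] by (fastforce simp: deg_def)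
  then have "(E ^^ 2) z z" using edge_sym by (metis numeral_2_eq_2 relpowp_Suc_I relpowp_Suc_0)
  have "(E ^^ (2 * j)) z z" for j
  proof (induction j)
    case 0
    show ?case by simp
  next
    case (Suc j)
    have "2 * Suc j = 2 * j + 2" by simp
    then show ?case using relpowp_trans[OF Suc.IH \<open>(E ^^ 2) z z\<close>] by metis
  qed
  then show ?thesis using relpowp_trans[OF assms(1)] by blast
qed

lemma even_walk_uniform_length: "\<exists>N. \<forall>x\<in>V. \<forall>y\<in>V. even_walk x y \<longrightarrow> (E ^^ N) x y"
proof -
  have "\<forall>p\<in>V \<times> V. \<exists>m. even_walk (fst p) (snd p) \<longrightarrow> (E ^^ (2 * m)) (fst p) (snd p)"
    unfolding even_walk_def by (auto elim!: evenE)
  then obtain m where m: "\<And>p. p \<in> V \<times> V \<Longrightarrow> even_walk (fst p) (snd p) \<Longrightarrow> (E ^^ (2 * m p)) (fst p) (snd p)"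
    by metis
  define M where "M = Max (m ` (V \<times> V))"
  have "(E ^^ (2 * M)) x y" if "x \<in> V" "y \<in> V" "even_walk x y" for x y
  proof -
    have "m (x, y) \<le> M" unfolding M_def using finite_V that by (intro Max_ge) auto
    moreover have "(E ^^ (2 * m (x, y) + 2 * (M - m (x, y)))) x y"
      using walk_pad m[of "(x, y)"] that by simp
    ultimately show ?thesis by (simp add: algebra_simps)
  qed
  then show ?thesis by blast
qed

definition side_stationary :: "'a \<Rightarrow> nat \<Rightarrow> 'a \<Rightarrow> real" where
  "side_stationary w k x = (if walk_side w k x then 2 * stationary x else 0)"

lemma side_degree_sum:
  assumes "bipartite" "w \<in> V"
  shows "(\<Sum>x\<in>V. if walk_side w k x then real (dg x) else 0) = degree_sum / 2"
proof -
  let ?A = "\<Sum>x\<in>V. if walk_side w k x then real (dg x) else 0"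
  let ?B = "\<Sum>x\<in>V. if walk_side w k x then 0 else real (dg x)"
  have "?A = (\<Sum>x\<in>V. \<Sum>y\<in>V. if E x y then (if walk_side w k x then 1 else 0) else 0)"
    unfolding sum_if_edge by (rule sum.cong) auto
  also have "\<dots> = (\<Sum>x\<in>V. \<Sum>y\<in>V. if E x y then (if walk_side w k y then 0 else 1) else 0)"
    using walk_side_edge_iff[OF assms] by (intro sum.cong refl) auto
  also have "\<dots> = (\<Sum>y\<in>V. \<Sum>x\<in>V. if E x y then (if walk_side w k y then 0 else 1) else 0)"
    by (rule sum.swap)
  also have "\<dots> = ?B"
    unfolding sum_if_edge' by (rule sum.cong) auto
  finally have "?A = ?B" .
  moreover have "?A + ?B = degree_sum"
    unfolding degree_sum_def by (simp add: sum.distrib[symmetric] if_distrib cong: if_cong)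
  ultimately show ?thesis by simp
qed

lemma sum_side_stationary_half:
  assumes "bipartite" "w \<in> V"
  shows "(\<Sum>x\<in>V. if walk_side w k x then stationary x else 0) = 1 / 2"
proof -
  have "(\<Sum>x\<in>V. if walk_side w k x then stationary x else 0)
      = (\<Sum>x\<in>V. if walk_side w k x then real (dg x) else 0) / degree_sum"
    unfolding stationary_def sum_divide_distrib by (rule sum.cong) auto
  then show ?thesis using side_degree_sum[OF assms] degree_sum_pos by simp
qed

lemma distribution_side_stationary:
  assumes "bipartite" "w \<in> V"
  shows "distribution (side_stationary w k)"
proof -
  have "(\<Sum>x\<in>V. side_stationary w k x) = 2 * (\<Sum>x\<in>V. if walk_side w k x then stationary x else 0)"
    unfolding side_stationary_def sum_distrib_left by (rule sum.cong) auto
  then show ?thesis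
    using sum_side_stationary_half[OF assms] stationary_nonneg
    by (simp add: distribution_def side_stationary_def)
qed

lemma walk_step_side_stationary:
  assumes "bipartite" "w \<in> V" "y \<in> V"
  shows "walk_step V E 0 (side_stationary w k) y = side_stationary w (Suc k) y"
proof -
  let ?c = "if walk_side w (Suc k) y then 2 / degree_sum else 0"
  have "(\<Sum>x\<in>V. if E x y then side_stationary w k x / real (dg x) else 0)
      = (\<Sum>x\<in>V. if E x y then ?c else 0)"
  proof (rule sum.cong)
    fix x assume "x \<in> V"
    have "E x y \<Longrightarrow> walk_side w k x \<longleftrightarrow> walk_side w (Suc k) y"
      using walk_side_edge_iff[OF assms(1,2)] walk_side_Suc[OF assms(1,2,3)] by blast
    then show "(if E x y then side_stationary w k x / real (dg x) else 0) = (if E x y then ?c else 0)"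
      using stationary_div_deg[of x y] by (auto simp: side_stationary_def)
  qed simp
  also have "\<dots> = real (dg y) * ?c" by (rule sum_if_edge')
  finally show ?thesis
    using assms(3) by (simp add: walk_step_0_eq side_stationary_def stationary_def)
qed

section \<open>Convergence of the walk distributions\<close>

lemma tendsto_walk_dist_stationary:
  assumes "0 \<le> g" "g < 1" "w \<in> V" "0 < g \<or> \<not> bipartite"
  shows "(\<lambda>k. \<Sum>x\<in>V. \<bar>walk_dist V E g w k x - stationary x\<bar>) \<longlonglongrightarrow> 0"
proof -
  obtain N where N: "\<And>x z. x \<in> V \<Longrightarrow> z \<in> V \<Longrightarrow> 0 < walk_dist V E g x N z"
  proof (cases "0 < g")
    case True
    then show ?thesis using that walk_dist_pos_lazy assms by blast
  next
    case False
    then have "g = 0" "\<forall>x\<in>V. \<forall>y\<in>V. even_walk x y" using assms unfolding bipartite_def by auto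
    moreover obtain M where "\<forall>x\<in>V. \<forall>y\<in>V. even_walk x y \<longrightarrow> (E ^^ M) x y"
      using even_walk_uniform_length by blast
    ultimately show ?thesis using that[of M] walk_dist_pos_walk by simp
  qed
  obtain z where "z \<in> V" using V_nonempty by blast
  show ?thesis
  proof (rule walk_driven_tendsto_0[where N = N])
    show "walk_dist V E g w (Suc k) x - stationary x
        = walk_step V E g (\<lambda>x. walk_dist V E g w k x - stationary x) x" if "x \<in> V" for k x
      using that by (simp add: walk_step_diff walk_step_stationary)
    show "(\<Sum>x\<in>V. walk_dist V E g w k x - stationary x) = 0" for k
      using distribution_stationary \<open>w \<in> V\<close>
      by (simp add: sum_subtractf sum_walk_dist distribution_def)
    show "\<exists>z\<in>V. \<forall>x\<in>V. walk_dist V E g w k x - stationary x \<noteq> 0 \<longrightarrow> 0 < walk_dist V E g x N z" for k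
      using N \<open>z \<in> V\<close> by blast
  qed (use assms in auto)
qed

lemma tendsto_walk_dist_side_stationary:
  assumes "bipartite" "w \<in> V"
  shows "(\<lambda>k. \<Sum>x\<in>V. \<bar>walk_dist V E 0 w k x - side_stationary w k x\<bar>) \<longlonglongrightarrow> 0"
proof -
  obtain N where N: "\<And>x y. x \<in> V \<Longrightarrow> y \<in> V \<Longrightarrow> even_walk x y \<Longrightarrow> (E ^^ N) x y"
    using even_walk_uniform_length by blast
  show ?thesis
  proof (rule walk_driven_tendsto_0[where N = N])
    show "walk_dist V E 0 w (Suc k) x - side_stationary w (Suc k) x
        = walk_step V E 0 (\<lambda>x. walk_dist V E 0 w k x - side_stationary w k x) x" if "x \<in> V" for k x
      using that assms by (simp add: walk_step_diff walk_step_side_stationary)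
    show "(\<Sum>x\<in>V. walk_dist V E 0 w k x - side_stationary w k x) = 0" for k
      using distribution_side_stationary[OF assms] \<open>w \<in> V\<close>
      by (simp add: sum_subtractf sum_walk_dist distribution_def)
    show "\<exists>z\<in>V. \<forall>x\<in>V. walk_dist V E 0 w k x - side_stationary w k x \<noteq> 0
        \<longrightarrow> 0 < walk_dist V E 0 x N z" for k
    proof (cases "\<exists>z\<in>V. walk_side w k z")
      case True
      \<comment> \<open>the error lives on the current side, whose vertices are pairwise joined by
        walks of the common even length \<open>N\<close>\<close>
      then obtain z where "z \<in> V" "walk_side w k z" by blast
      have "walk_side w k x" if "walk_dist V E 0 w k x - side_stationary w k x \<noteq> 0" for x
        using that walk_dist_0_walk_side[OF \<open>w \<in> V\<close>] by (force simp: side_stationary_def)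
      then show ?thesis
        using \<open>z \<in> V\<close> \<open>walk_side w k z\<close> N walk_side_even_walk walk_dist_pos_walk \<open>w \<in> V\<close>
        by (metis order_refl zero_less_one)
    next
      case False
      then show ?thesis
        using walk_dist_0_walk_side[OF \<open>w \<in> V\<close>] V_nonempty by (force simp: side_stationary_def)
    qed
  qed auto
qed

section \<open>Transport plans\<close>

definition cost :: "('a \<times> 'a \<Rightarrow> real) \<Rightarrow> real" where
  "cost T = (\<Sum>x\<in>V. \<Sum>y\<in>V. real (gdist E x y) * T (x, y))"

lemma wasserstein_eq_Inf_cost:
  "wasserstein V E \<mu> \<nu> = Inf {cost T | T. transport_plan V \<mu> \<nu> T}"
  unfolding wasserstein_def cost_def by (simp add: sum.cartesian_product split_def)

lemma cost_nonneg: "transport_plan V \<mu> \<nu> T \<Longrightarrow> 0 \<le> cost T"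
  unfolding cost_def transport_plan_def by (auto intro!: sum_nonneg)

lemma wasserstein_le_cost: "transport_plan V \<mu> \<nu> T \<Longrightarrow> wasserstein V E \<mu> \<nu> \<le> cost T"
  unfolding wasserstein_eq_Inf_cost
  by (rule cInf_lower) (auto simp: bdd_below_def intro!: exI[of _ 0] cost_nonneg)

lemma transport_plan_scaled_product:
  assumes a_nonneg: "\<And>x. x \<in> V \<Longrightarrow> 0 \<le> a x" and b_nonneg: "\<And>x. x \<in> V \<Longrightarrow> 0 \<le> b x"
    and same_mass: "(\<Sum>x\<in>V. b x) = (\<Sum>x\<in>V. a x)"
  shows "transport_plan V a b (\<lambda>p. a (fst p) * b (snd p) / (\<Sum>x\<in>V. a x))"
proof (cases "(\<Sum>x\<in>V. a x) = 0")
  case True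
  then have "x \<in> V \<Longrightarrow> a x = 0" "x \<in> V \<Longrightarrow> b x = 0" for x
    using finite_V a_nonneg b_nonneg same_mass sum_nonneg_eq_0_iff by metis+
  then show ?thesis by (simp add: transport_plan_def)
next
  case False
  then show ?thesis
    using a_nonneg b_nonneg same_mass unfolding transport_plan_def
    by (auto simp: sum_divide_distrib[symmetric] sum_distrib_left[symmetric]
        sum_distrib_right[symmetric] intro!: divide_nonneg_nonneg sum_nonneg)
qed

lemma transport_plan_diagonal:
  "(\<And>x. x \<in> V \<Longrightarrow> 0 \<le> m x) \<Longrightarrow> transport_plan V m m (\<lambda>p. if fst p = snd p then m (fst p) else 0)"
  unfolding transport_plan_def using finite_V by (auto simp: if_distrib cong: if_cong)

lemma transport_plan_add:
  "transport_plan V \<mu> \<nu> T \<Longrightarrow> transport_plan V \<mu>' \<nu>' T'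
    \<Longrightarrow> transport_plan V (\<lambda>x. \<mu> x + \<mu>' x) (\<lambda>x. \<nu> x + \<nu>' x) (\<lambda>p. T p + T' p)"
  unfolding transport_plan_def by (simp add: sum.distrib)

lemma cost_ge_lipschitz:
  assumes T: "transport_plan V \<mu> \<nu> T"
    and lipschitz: "\<And>x y. x \<in> V \<Longrightarrow> y \<in> V \<Longrightarrow> f y - f x \<le> real (gdist E x y)"
  shows "(\<Sum>y\<in>V. f y * \<nu> y) - (\<Sum>x\<in>V. f x * \<mu> x) \<le> cost T"
proof -
  have "(\<Sum>y\<in>V. f y * \<nu> y) = (\<Sum>y\<in>V. \<Sum>x\<in>V. f y * T (x, y))"
    using T unfolding transport_plan_def by (auto simp: sum_distrib_left[symmetric] intro!: sum.cong)
  also have "\<dots> = (\<Sum>x\<in>V. \<Sum>y\<in>V. f y * T (x, y))"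
    by (rule sum.swap)
  finally have "(\<Sum>y\<in>V. f y * \<nu> y) = (\<Sum>x\<in>V. \<Sum>y\<in>V. f y * T (x, y))" .
  moreover have "(\<Sum>x\<in>V. f x * \<mu> x) = (\<Sum>x\<in>V. \<Sum>y\<in>V. f x * T (x, y))"
    using T unfolding transport_plan_def by (auto simp: sum_distrib_left[symmetric] intro!: sum.cong)
  ultimately have "(\<Sum>y\<in>V. f y * \<nu> y) - (\<Sum>x\<in>V. f x * \<mu> x)
      = (\<Sum>x\<in>V. \<Sum>y\<in>V. (f y - f x) * T (x, y))"
    by (simp add: sum_subtractf[symmetric] left_diff_distrib)
  also have "\<dots> \<le> cost T"
    unfolding cost_def using T lipschitz
    by (intro sum_mono mult_right_mono) (auto simp: transport_plan_def)
  finally show ?thesis .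
qed

lemma wasserstein_ge_lipschitz:
  assumes "distribution \<mu>" "distribution \<nu>"
    and "\<And>x y. x \<in> V \<Longrightarrow> y \<in> V \<Longrightarrow> f y - f x \<le> real (gdist E x y)"
  shows "(\<Sum>y\<in>V. f y * \<nu> y) - (\<Sum>x\<in>V. f x * \<mu> x) \<le> wasserstein V E \<mu> \<nu>"
  unfolding wasserstein_eq_Inf_cost
  using transport_plan_scaled_product[of \<mu> \<nu>] assms(1,2) cost_ge_lipschitz[OF _ assms(3)]
  by (intro cInf_greatest) (auto simp: distribution_def)

lemma transport_plan_zero_row:
  "transport_plan V \<mu> \<nu> T \<Longrightarrow> x \<in> V \<Longrightarrow> \<mu> x = 0 \<Longrightarrow> y \<in> V \<Longrightarrow> T (x, y) = 0"
  unfolding transport_plan_def using finite_V sum_nonneg_eq_0_iff[of V "\<lambda>y. T (x, y)"] by auto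

lemma transport_plan_zero_column:
  "transport_plan V \<mu> \<nu> T \<Longrightarrow> y \<in> V \<Longrightarrow> \<nu> y = 0 \<Longrightarrow> x \<in> V \<Longrightarrow> T (x, y) = 0"
  unfolding transport_plan_def using finite_V sum_nonneg_eq_0_iff[of V "\<lambda>x. T (x, y)"] by auto

lemma cost_add_diagonal:
  "cost (\<lambda>p. (if fst p = snd p then D p else 0) + T p) = cost T"
  unfolding cost_def by (intro sum.cong refl) (auto simp: gdist_refl)

lemma cost_scaled_product_le:
  assumes "\<And>x. x \<in> V \<Longrightarrow> 0 \<le> a x" "\<And>x. x \<in> V \<Longrightarrow> 0 \<le> b x"
    and "(\<Sum>x\<in>V. b x) = (\<Sum>x\<in>V. a x)"
  shows "cost (\<lambda>p. a (fst p) * b (snd p) / (\<Sum>x\<in>V. a x)) \<le> real diam * (\<Sum>x\<in>V. a x)"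
proof -
  let ?r = "\<Sum>x\<in>V. a x"
  have "cost (\<lambda>p. a (fst p) * b (snd p) / ?r) \<le> (\<Sum>x\<in>V. \<Sum>y\<in>V. real diam * (a x * b y / ?r))"
    unfolding cost_def fst_conv snd_conv using assms gdist_le_diam
    by (intro sum_mono mult_right_mono) (auto intro!: divide_nonneg_nonneg sum_nonneg)
  also have "\<dots> = real diam * (\<Sum>x\<in>V. \<Sum>y\<in>V. a x * b y) / ?r"
    by (simp add: sum_distrib_left sum_divide_distrib)
  also have "\<dots> = real diam * ((\<Sum>x\<in>V. a x) * (\<Sum>y\<in>V. b y)) / ?r"
    by (simp only: sum_product)
  also have "\<dots> \<le> real diam * ?r"
    using assms(3) by (cases "?r = 0") auto
  finally show ?thesis .
qed

text \<open>Keep the common mass \<open>min (\<mu> x) (\<nu> x)\<close> in place and ship the excess of \<open>\<mu>\<close>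
  proportionally to the excess of \<open>\<nu>\<close>; the moved mass is at most the \<open>\<ell>\<^sub>1\<close> distance.\<close>
lemma exists_plan_cost_le_l1:
  assumes "\<And>x. x \<in> V \<Longrightarrow> 0 \<le> \<mu> x" and "\<And>x. x \<in> V \<Longrightarrow> 0 \<le> \<nu> x"
    and same_mass: "(\<Sum>x\<in>V. \<mu> x) = (\<Sum>x\<in>V. \<nu> x)"
  shows "\<exists>T. transport_plan V \<mu> \<nu> T \<and> cost T \<le> real diam * (\<Sum>x\<in>V. \<bar>\<mu> x - \<nu> x\<bar>)"
proof -
  define m where "m x = min (\<mu> x) (\<nu> x)" for x
  define a where "a x = \<mu> x - m x" for x
  define b where "b x = \<nu> x - m x" for x
  define T where "T p = (if fst p = snd p then m (fst p) else 0)
    + a (fst p) * b (snd p) / (\<Sum>x\<in>V. a x)" for p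
  have a_nonneg: "\<And>x. 0 \<le> a x" and b_nonneg: "\<And>x. 0 \<le> b x"
    and mass: "(\<Sum>x\<in>V. b x) = (\<Sum>x\<in>V. a x)"
    using same_mass by (auto simp: a_def b_def m_def sum_subtractf)
  moreover have "\<And>x. x \<in> V \<Longrightarrow> 0 \<le> m x" using assms by (simp add: m_def)
  ultimately have "transport_plan V (\<lambda>x. m x + a x) (\<lambda>x. m x + b x) T"
    unfolding T_def by (intro transport_plan_add transport_plan_diagonal transport_plan_scaled_product)
  then have "transport_plan V \<mu> \<nu> T" by (simp add: a_def b_def)
  moreover have "cost T \<le> real diam * (\<Sum>x\<in>V. a x)"
    unfolding T_def cost_add_diagonal using a_nonneg b_nonneg mass by (rule cost_scaled_product_le)
  moreover have "(\<Sum>x\<in>V. a x) \<le> (\<Sum>x\<in>V. \<bar>\<mu> x - \<nu> x\<bar>)"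
    unfolding a_def m_def by (intro sum_mono) auto
  ultimately show ?thesis by (meson mult_left_mono of_nat_0_le_iff order_trans)
qed

lemma cost_coupling_le:
  assumes K_nonneg: "\<And>x y z. x \<in> V \<Longrightarrow> y \<in> V \<Longrightarrow> z \<in> V \<Longrightarrow> 0 \<le> K x y z"
    and sum_K_z: "\<And>x y. x \<in> V \<Longrightarrow> y \<in> V \<Longrightarrow> (\<Sum>z\<in>V. K x y z) = T1 (x, y)"
    and sum_K_x: "\<And>y z. y \<in> V \<Longrightarrow> z \<in> V \<Longrightarrow> (\<Sum>x\<in>V. K x y z) = T2 (y, z)"
  shows "cost (\<lambda>p. \<Sum>y\<in>V. K (fst p) y (snd p)) \<le> cost T1 + cost T2"
proof -
  let ?d = "\<lambda>x y. real (gdist E x y)"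
  have "cost (\<lambda>p. \<Sum>y\<in>V. K (fst p) y (snd p))
      \<le> (\<Sum>x\<in>V. \<Sum>z\<in>V. \<Sum>y\<in>V. ?d x y * K x y z + ?d y z * K x y z)"
    unfolding cost_def fst_conv snd_conv sum_distrib_left
  proof (intro sum_mono)
    fix x z y assume "x \<in> V" "z \<in> V" "y \<in> V"
    then have "?d x z \<le> ?d x y + ?d y z" using gdist_triangle by (simp flip: of_nat_add)
    then show "?d x z * K x y z \<le> ?d x y * K x y z + ?d y z * K x y z"
      using K_nonneg \<open>x \<in> V\<close> \<open>y \<in> V\<close> \<open>z \<in> V\<close> by (simp add: mult_right_mono flip: distrib_right)
  qed
  also have "\<dots> = (\<Sum>x\<in>V. \<Sum>z\<in>V. \<Sum>y\<in>V. ?d x y * K x y z) + (\<Sum>x\<in>V. \<Sum>z\<in>V. \<Sum>y\<in>V. ?d y z * K x y z)"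
    by (simp only: sum.distrib)
  also have "(\<Sum>x\<in>V. \<Sum>z\<in>V. \<Sum>y\<in>V. ?d x y * K x y z) = (\<Sum>x\<in>V. \<Sum>y\<in>V. \<Sum>z\<in>V. ?d x y * K x y z)"
    by (rule sum.cong[OF refl], rule sum.swap)
  also have "\<dots> = cost T1"
    unfolding cost_def using sum_K_z by (simp add: sum_distrib_left[symmetric])
  also have "(\<Sum>x\<in>V. \<Sum>z\<in>V. \<Sum>y\<in>V. ?d y z * K x y z) = (\<Sum>z\<in>V. \<Sum>x\<in>V. \<Sum>y\<in>V. ?d y z * K x y z)"
    by (rule sum.swap)
  also have "\<dots> = (\<Sum>z\<in>V. \<Sum>y\<in>V. \<Sum>x\<in>V. ?d y z * K x y z)"
    by (rule sum.cong[OF refl], rule sum.swap)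
  also have "\<dots> = (\<Sum>y\<in>V. \<Sum>z\<in>V. \<Sum>x\<in>V. ?d y z * K x y z)"
    by (rule sum.swap)
  also have "\<dots> = cost T2"
    unfolding cost_def using sum_K_x by (simp add: sum_distrib_left[symmetric])
  finally show ?thesis .
qed

text \<open>Gluing: route the mass arriving at \<open>y\<close> under \<open>T1\<close> onwards in the proportions of \<open>T2\<close>.\<close>
lemma transport_plan_compose:
  assumes T1: "transport_plan V \<mu> \<rho> T1" and T2: "transport_plan V \<rho> \<sigma> T2"
  shows "\<exists>T. transport_plan V \<mu> \<sigma> T \<and> cost T \<le> cost T1 + cost T2"
proof -
  define K where "K x y z = T1 (x, y) * T2 (y, z) / \<rho> y" for x y z
  have K_nonneg: "0 \<le> K x y z" if "x \<in> V" "y \<in> V" "z \<in> V" for x y z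
    using T1 T2 that unfolding K_def transport_plan_def by (metis divide_nonneg_nonneg
        mult_nonneg_nonneg sum_nonneg)
  have sum_K_z: "(\<Sum>z\<in>V. K x y z) = T1 (x, y)" if "x \<in> V" "y \<in> V" for x y
    using T2 that transport_plan_zero_column[OF T1 \<open>y \<in> V\<close> _ \<open>x \<in> V\<close>]
    unfolding K_def transport_plan_def
    by (cases "\<rho> y = 0") (auto simp: sum_distrib_left[symmetric] sum_divide_distrib[symmetric])
  have sum_K_x: "(\<Sum>x\<in>V. K x y z) = T2 (y, z)" if "y \<in> V" "z \<in> V" for y z
    using T1 that transport_plan_zero_row[OF T2 \<open>y \<in> V\<close> _ \<open>z \<in> V\<close>]
    unfolding K_def transport_plan_def
    by (cases "\<rho> y = 0") (auto simp: sum_distrib_right[symmetric] sum_divide_distrib[symmetric])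
  have "transport_plan V \<mu> \<sigma> (\<lambda>p. \<Sum>y\<in>V. K (fst p) y (snd p))"
    unfolding transport_plan_def
  proof (intro conjI ballI)
    show "0 \<le> (\<Sum>y\<in>V. K (fst (x, z)) y (snd (x, z)))" if "x \<in> V" "z \<in> V" for x z
      using K_nonneg that by (auto intro: sum_nonneg)
    show "(\<Sum>z\<in>V. \<Sum>y\<in>V. K (fst (x, z)) y (snd (x, z))) = \<mu> x" if "x \<in> V" for x
      using sum.swap[of "K x" V V] sum_K_z T1 that unfolding transport_plan_def by simp
    show "(\<Sum>x\<in>V. \<Sum>y\<in>V. K (fst (x, z)) y (snd (x, z))) = \<sigma> z" if "z \<in> V" for z
      using sum.swap[of "\<lambda>x y. K x y z" V V] sum_K_x T2 that unfolding transport_plan_def by simp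
  qed
  then show ?thesis using cost_coupling_le[OF K_nonneg sum_K_z sum_K_x] by blast
qed

section \<open>Limits of the Wasserstein distance\<close>

lemma wasserstein_le_perturbed:
  assumes "distribution \<mu>" "distribution \<nu>" "distribution \<rho>" "distribution \<sigma>"
    and plan: "transport_plan V \<rho> \<sigma> T"
  shows "wasserstein V E \<mu> \<nu>
    \<le> cost T + real diam * ((\<Sum>x\<in>V. \<bar>\<mu> x - \<rho> x\<bar>) + (\<Sum>x\<in>V. \<bar>\<nu> x - \<sigma> x\<bar>))"
proof -
  obtain T1 where T1: "transport_plan V \<mu> \<rho> T1" "cost T1 \<le> real diam * (\<Sum>x\<in>V. \<bar>\<mu> x - \<rho> x\<bar>)"
    using exists_plan_cost_le_l1[of \<mu> \<rho>] assms unfolding distribution_def by auto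
  obtain T3 where T3: "transport_plan V \<sigma> \<nu> T3" "cost T3 \<le> real diam * (\<Sum>x\<in>V. \<bar>\<nu> x - \<sigma> x\<bar>)"
    using exists_plan_cost_le_l1[of \<sigma> \<nu>] assms unfolding distribution_def
    by (auto simp: abs_minus_commute)
  obtain T2 where T2: "transport_plan V \<mu> \<sigma> T2" "cost T2 \<le> cost T1 + cost T"
    using transport_plan_compose[OF T1(1) plan] by blast
  obtain T4 where "transport_plan V \<mu> \<nu> T4" "cost T4 \<le> cost T2 + cost T3"
    using transport_plan_compose[OF T2(1) T3(1)] by blast
  then show ?thesis using wasserstein_le_cost T1(2) T2(2) T3(2) by (smt (verit) distrib_left)
qed

lemma wasserstein_ge_perturbed:
  assumes "distribution \<mu>" "distribution \<nu>"
    and "\<And>x y. x \<in> V \<Longrightarrow> y \<in> V \<Longrightarrow> f y - f x \<le> real (gdist E x y)"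
    and bounded: "\<And>x. x \<in> V \<Longrightarrow> \<bar>f x\<bar> \<le> 1"
  shows "(\<Sum>y\<in>V. f y * \<sigma> y) - (\<Sum>x\<in>V. f x * \<rho> x)
    - ((\<Sum>x\<in>V. \<bar>\<mu> x - \<rho> x\<bar>) + (\<Sum>x\<in>V. \<bar>\<nu> x - \<sigma> x\<bar>)) \<le> wasserstein V E \<mu> \<nu>"
proof -
  have "(\<Sum>y\<in>V. f y * \<nu> y) - (\<Sum>x\<in>V. f x * \<mu> x) \<le> wasserstein V E \<mu> \<nu>"
    using assms(1-3) by (rule wasserstein_ge_lipschitz)
  moreover have "(\<Sum>x\<in>V. f x * \<sigma> x) - (\<Sum>x\<in>V. f x * \<nu> x) \<le> (\<Sum>x\<in>V. \<bar>\<nu> x - \<sigma> x\<bar>)"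
    using sum_bounded_weights_le_l1[where A = V and f = f and a = \<sigma> and b = \<nu>] bounded
    by (simp add: abs_minus_commute)
  moreover have "(\<Sum>x\<in>V. f x * \<mu> x) - (\<Sum>x\<in>V. f x * \<rho> x) \<le> (\<Sum>x\<in>V. \<bar>\<mu> x - \<rho> x\<bar>)"
    using sum_bounded_weights_le_l1[where A = V and f = f and a = \<mu> and b = \<rho>] bounded by simp
  ultimately show ?thesis by linarith
qed

lemma tendsto_wasserstein_certified:
  fixes \<mu> \<nu> \<rho> \<sigma> :: "nat \<Rightarrow> 'a \<Rightarrow> real"
  assumes distributions: "\<And>k. distribution (\<mu> k)" "\<And>k. distribution (\<nu> k)"
      "\<And>k. distribution (\<rho> k)" "\<And>k. distribution (\<sigma> k)"
    and \<mu>_\<rho>: "(\<lambda>k. \<Sum>x\<in>V. \<bar>\<mu> k x - \<rho> k x\<bar>) \<longlonglongrightarrow> 0"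
    and \<nu>_\<sigma>: "(\<lambda>k. \<Sum>x\<in>V. \<bar>\<nu> k x - \<sigma> k x\<bar>) \<longlonglongrightarrow> 0"
    and plans: "\<And>k. \<exists>T. transport_plan V (\<rho> k) (\<sigma> k) T \<and> cost T \<le> c"
    and potentials: "\<And>k. \<exists>f. (\<forall>x\<in>V. \<forall>y\<in>V. f y - f x \<le> real (gdist E x y)) \<and> (\<forall>x\<in>V. \<bar>f x\<bar> \<le> 1)
      \<and> c \<le> (\<Sum>y\<in>V. f y * \<sigma> k y) - (\<Sum>x\<in>V. f x * \<rho> k x)"
  shows "(\<lambda>k. wasserstein V E (\<mu> k) (\<nu> k)) \<longlonglongrightarrow> c"
proof -
  define e where "e k = (\<Sum>x\<in>V. \<bar>\<mu> k x - \<rho> k x\<bar>) + (\<Sum>x\<in>V. \<bar>\<nu> k x - \<sigma> k x\<bar>)" for k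
  have e: "e \<longlonglongrightarrow> 0" unfolding e_def using tendsto_add[OF \<mu>_\<rho> \<nu>_\<sigma>] by simp
  have upper: "wasserstein V E (\<mu> k) (\<nu> k) \<le> c + real diam * e k" for k
  proof -
    obtain T where "transport_plan V (\<rho> k) (\<sigma> k) T" and "cost T \<le> c" using plans by blast
    then have "wasserstein V E (\<mu> k) (\<nu> k) \<le> cost T + real diam * e k"
      unfolding e_def by (intro wasserstein_le_perturbed distributions)
    then show ?thesis using \<open>cost T \<le> c\<close> by linarith
  qed
  have lower: "c - e k \<le> wasserstein V E (\<mu> k) (\<nu> k)" for k
  proof -
    obtain f where "\<forall>x\<in>V. \<forall>y\<in>V. f y - f x \<le> real (gdist E x y)" "\<forall>x\<in>V. \<bar>f x\<bar> \<le> 1"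
      and gain: "c \<le> (\<Sum>y\<in>V. f y * \<sigma> k y) - (\<Sum>x\<in>V. f x * \<rho> k x)"
      using potentials by blast
    then have "(\<Sum>y\<in>V. f y * \<sigma> k y) - (\<Sum>x\<in>V. f x * \<rho> k x) - e k \<le> wasserstein V E (\<mu> k) (\<nu> k)"
      unfolding e_def by (intro wasserstein_ge_perturbed distributions) auto
    then show ?thesis using gain by linarith
  qed
  have "(\<lambda>k. c - e k) \<longlonglongrightarrow> c - 0" and "(\<lambda>k. c + real diam * e k) \<longlonglongrightarrow> c + real diam * 0"
    by (intro tendsto_intros e)+
  then have "(\<lambda>k. c - e k) \<longlonglongrightarrow> c" and "(\<lambda>k. c + real diam * e k) \<longlonglongrightarrow> c"
    by simp_all
  from real_tendsto_sandwich[OF _ _ this] show ?thesis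
    using lower upper by simp
qed

lemma lipschitz_off_indicator:
  "x \<in> V \<Longrightarrow> y \<in> V \<Longrightarrow> (if P y then 0 else 1) - (if P x then 0 else 1) \<le> real (gdist E x y)"
  using gdist_ge_1[of x y] by (cases "x = y") auto

lemma tendsto_wasserstein_0:
  assumes "\<And>k. distribution (\<mu> k)" "\<And>k. distribution (\<nu> k)" "\<And>k. distribution (\<rho> k)"
    and "(\<lambda>k. \<Sum>x\<in>V. \<bar>\<mu> k x - \<rho> k x\<bar>) \<longlonglongrightarrow> 0" "(\<lambda>k. \<Sum>x\<in>V. \<bar>\<nu> k x - \<rho> k x\<bar>) \<longlonglongrightarrow> 0"
  shows "(\<lambda>k. wasserstein V E (\<mu> k) (\<nu> k)) \<longlonglongrightarrow> 0"
proof (rule tendsto_wasserstein_certified[where \<sigma> = \<rho>])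
  show "\<exists>T. transport_plan V (\<rho> k) (\<rho> k) T \<and> cost T \<le> 0" for k
    using exists_plan_cost_le_l1[of "\<rho> k" "\<rho> k"] assms(3) unfolding distribution_def by auto
  show "\<exists>f. (\<forall>x\<in>V. \<forall>y\<in>V. f y - f x \<le> real (gdist E x y)) \<and> (\<forall>x\<in>V. \<bar>f x\<bar> \<le> 1)
      \<and> 0 \<le> (\<Sum>y\<in>V. f y * \<rho> k y) - (\<Sum>x\<in>V. f x * \<rho> k x)" for k
    by (intro exI[of _ "\<lambda>_. 0"]) simp
qed (use assms in auto)

lemma sum_side_edge_row:
  "(\<Sum>y\<in>V. if walk_side w k x \<and> E x y then c else 0) = (if walk_side w k x then real (dg x) * c else 0)"
  by (cases "walk_side w k x") (simp_all add: sum_if_edge)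

lemma sum_side_edge_column:
  assumes "bipartite" "w \<in> V"
  shows "(\<Sum>x\<in>V. if walk_side w k x \<and> E x y then c else 0)
    = (if walk_side w k y then 0 else real (dg y) * c)"
proof -
  have "(\<Sum>x\<in>V. if walk_side w k x \<and> E x y then c else 0)
      = (\<Sum>x\<in>V. if E x y then (if walk_side w k y then 0 else c) else 0)"
    using walk_side_edge_iff[OF assms] by (intro sum.cong refl) auto
  then show ?thesis by (simp add: sum_if_edge')
qed

lemma cost_side_edges:
  "cost (\<lambda>p. if walk_side w k (fst p) \<and> E (fst p) (snd p) then c else 0)
    = (\<Sum>x\<in>V. if walk_side w k x then real (dg x) * c else 0)"
  unfolding cost_def sum_side_edge_row[symmetric]
  by (intro sum.cong refl) (auto simp: gdist_edge)

lemma sum_side_deg_mult: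
  assumes "bipartite" "w \<in> V"
  shows "(\<Sum>x\<in>V. if walk_side w k x then real (dg x) * c else 0) = c * degree_sum / 2"
proof -
  have "(\<Sum>x\<in>V. if walk_side w k x then real (dg x) * c else 0)
      = c * (\<Sum>x\<in>V. if walk_side w k x then real (dg x) else 0)"
    unfolding sum_distrib_left by (rule sum.cong) auto
  then show ?thesis using side_degree_sum[OF assms] by simp
qed

text \<open>Each vertex on the side keeps half of its mass and spreads the other half evenly
  over its edges.\<close>
lemma plan_side_stationary:
  assumes "bipartite" "w \<in> V"
  shows "\<exists>T. transport_plan V (side_stationary w k) stationary T \<and> cost T \<le> 1 / 2"
proof -
  define T where "T p = (if fst p = snd p then side_stationary w k (fst p) / 2 else 0)
      + (if walk_side w k (fst p) \<and> E (fst p) (snd p) then 1 / degree_sum else 0)" for p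
  have "transport_plan V (side_stationary w k) stationary T"
    unfolding transport_plan_def
  proof (intro conjI ballI)
    show "0 \<le> T (x, y)" for x y
      unfolding T_def side_stationary_def using degree_sum_pos stationary_nonneg by auto
    show "(\<Sum>y\<in>V. T (x, y)) = side_stationary w k x" if "x \<in> V" for x
      using that finite_V
      by (simp add: T_def sum.distrib sum_side_edge_row side_stationary_def stationary_def)
    show "(\<Sum>x\<in>V. T (x, y)) = stationary y" if "y \<in> V" for y
      using that finite_V
      by (simp add: T_def sum.distrib sum_side_edge_column[OF assms] side_stationary_def
          stationary_def)
  qed
  moreover have "cost T = 1 / 2"
    unfolding T_def cost_add_diagonal cost_side_edges
    using sum_side_deg_mult[OF assms, of k "1 / degree_sum"] degree_sum_pos by simp
  ultimately show ?thesis by auto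
qed

lemma plan_side_stationary_Suc:
  assumes "bipartite" "w \<in> V"
  shows "\<exists>T. transport_plan V (side_stationary w k) (side_stationary w (Suc k)) T \<and> cost T \<le> 1"
proof -
  define T where "T p = (if walk_side w k (fst p) \<and> E (fst p) (snd p) then 2 / degree_sum else 0)"
    for p
  have "transport_plan V (side_stationary w k) (side_stationary w (Suc k)) T"
    unfolding transport_plan_def
  proof (intro conjI ballI)
    show "0 \<le> T (x, y)" for x y
      unfolding T_def using degree_sum_pos by auto
    show "(\<Sum>y\<in>V. T (x, y)) = side_stationary w k x" if "x \<in> V" for x
      by (simp add: T_def sum_side_edge_row side_stationary_def stationary_def)
    show "(\<Sum>x\<in>V. T (x, y)) = side_stationary w (Suc k) y" if "y \<in> V" for y
      using that walk_side_Suc[OF assms that]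
      by (simp add: T_def sum_side_edge_column[OF assms] side_stationary_def stationary_def)
  qed
  moreover have "cost T = 1"
    unfolding T_def cost_side_edges
    using sum_side_deg_mult[OF assms, of k "2 / degree_sum"] degree_sum_pos by simp
  ultimately show ?thesis by auto
qed

lemma sum_off_side_stationary:
  assumes "bipartite" "w \<in> V"
  shows "(\<Sum>x\<in>V. if walk_side w k x then 0 else stationary x) = 1 / 2"
proof -
  have "(\<Sum>x\<in>V. if walk_side w k x then stationary x else 0)
      + (\<Sum>x\<in>V. if walk_side w k x then 0 else stationary x) = (\<Sum>x\<in>V. stationary x)"
    unfolding sum.distrib[symmetric] by (rule sum.cong) auto
  then show ?thesis
    using distribution_stationary sum_side_stationary_half[OF assms] by (simp add: distribution_def)
qed

lemma sum_off_side_weighted_side_stationary: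
  "(\<Sum>x\<in>V. (if walk_side w k x then 0 else 1) * side_stationary w k x) = 0"
  by (rule sum.neutral) (simp add: side_stationary_def)

lemma tendsto_wasserstein_half:
  assumes "bipartite" "u \<in> V" "\<And>k. distribution (\<mu> k)" "\<And>k. distribution (\<nu> k)"
    and "(\<lambda>k. \<Sum>x\<in>V. \<bar>\<mu> k x - side_stationary u k x\<bar>) \<longlonglongrightarrow> 0"
    and "(\<lambda>k. \<Sum>x\<in>V. \<bar>\<nu> k x - stationary x\<bar>) \<longlonglongrightarrow> 0"
  shows "(\<lambda>k. wasserstein V E (\<mu> k) (\<nu> k)) \<longlonglongrightarrow> 1 / 2"
proof (rule tendsto_wasserstein_certified[where \<rho> = "side_stationary u" and \<sigma> = "\<lambda>_. stationary"])
  fix k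
  let ?f = "\<lambda>x. if walk_side u k x then 0 else 1 :: real"
  have "(\<Sum>y\<in>V. ?f y * stationary y) = (\<Sum>y\<in>V. if walk_side u k y then 0 else stationary y)"
    by (rule sum.cong) auto
  also have "\<dots> = 1 / 2" by (rule sum_off_side_stationary[OF assms(1,2)])
  finally show "\<exists>f. (\<forall>x\<in>V. \<forall>y\<in>V. f y - f x \<le> real (gdist E x y)) \<and> (\<forall>x\<in>V. \<bar>f x\<bar> \<le> 1)
      \<and> 1 / 2 \<le> (\<Sum>y\<in>V. f y * stationary y) - (\<Sum>x\<in>V. f x * side_stationary u k x)"
    using lipschitz_off_indicator[of _ _ "walk_side u k"] sum_off_side_weighted_side_stationary
    by (intro exI[of _ ?f]) auto
qed (use assms plan_side_stationary distribution_side_stationary distribution_stationary in auto)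

lemma tendsto_wasserstein_one:
  assumes "bipartite" "u \<in> V" "\<And>k. distribution (\<mu> k)" "\<And>k. distribution (\<nu> k)"
    and "(\<lambda>k. \<Sum>x\<in>V. \<bar>\<mu> k x - side_stationary u k x\<bar>) \<longlonglongrightarrow> 0"
    and "(\<lambda>k. \<Sum>x\<in>V. \<bar>\<nu> k x - side_stationary u (Suc k) x\<bar>) \<longlonglongrightarrow> 0"
  shows "(\<lambda>k. wasserstein V E (\<mu> k) (\<nu> k)) \<longlonglongrightarrow> 1"
proof (rule tendsto_wasserstein_certified[where \<rho> = "side_stationary u"
      and \<sigma> = "\<lambda>k. side_stationary u (Suc k)"])
  fix k
  let ?f = "\<lambda>x. if walk_side u k x then 0 else 1 :: real"
  have "(\<Sum>y\<in>V. ?f y * side_stationary u (Suc k) y) = (\<Sum>y\<in>V. side_stationary u (Suc k) y)"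
    using walk_side_Suc[OF assms(1,2)] by (intro sum.cong refl) (auto simp: side_stationary_def)
  also have "\<dots> = 1"
    using distribution_side_stationary[OF assms(1,2)] by (simp add: distribution_def)
  finally show "\<exists>f. (\<forall>x\<in>V. \<forall>y\<in>V. f y - f x \<le> real (gdist E x y)) \<and> (\<forall>x\<in>V. \<bar>f x\<bar> \<le> 1)
      \<and> 1 \<le> (\<Sum>y\<in>V. f y * side_stationary u (Suc k) y) - (\<Sum>x\<in>V. f x * side_stationary u k x)"
    using lipschitz_off_indicator[of _ _ "walk_side u k"] sum_off_side_weighted_side_stationary
    by (intro exI[of _ ?f]) auto
qed (use assms plan_side_stationary_Suc distribution_side_stationary in auto)

lemma tendsto_wasserstein_walks_bipartite:
  assumes "bipartite" "u \<in> V" "v \<in> V" "0 \<le> \<beta>" "\<beta> < 1"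
  shows "\<exists>L\<in>{0, 1 / 2, 1}.
    (\<lambda>k. wasserstein V E (walk_dist V E 0 u k) (walk_dist V E \<beta> v k)) \<longlonglongrightarrow> L"
    (is "\<exists>L\<in>_. ?W \<longlonglongrightarrow> L")
proof -
  have distributions: "distribution (walk_dist V E 0 u k)" "distribution (walk_dist V E \<beta> v k)" for k
    using assms distribution_walk_dist by auto
  have \<mu>: "(\<lambda>k. \<Sum>x\<in>V. \<bar>walk_dist V E 0 u k x - side_stationary u k x\<bar>) \<longlonglongrightarrow> 0"
    using tendsto_walk_dist_side_stationary assms by simp
  consider "0 < \<beta>" | "\<beta> = 0" "even_walk u v" | "\<beta> = 0" "\<not> even_walk u v"
    using assms by linarith
  then show ?thesis
  proof cases
    case 1
    then have "?W \<longlonglongrightarrow> 1 / 2"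
      using \<mu> assms distributions
      by (intro tendsto_wasserstein_half[where u = u] tendsto_walk_dist_stationary) auto
    then show ?thesis by blast
  next
    case 2
    then have "side_stationary v k = side_stationary u k" for k
      using walk_side_even_walk_start by (auto simp: side_stationary_def)
    then have "?W \<longlonglongrightarrow> 0"
      using \<mu> tendsto_walk_dist_side_stationary[OF assms(1,3)] 2 assms
        distributions distribution_side_stationary[OF assms(1,2)]
      by (intro tendsto_wasserstein_0[where \<rho> = "side_stationary u"]) auto
    then show ?thesis by blast
  next
    case 3
    then have "side_stationary v k = side_stationary u (Suc k)" for k
      using walk_side_odd_walk_start assms by (auto simp: side_stationary_def)
    then have "?W \<longlonglongrightarrow> 1"
      using \<mu> tendsto_walk_dist_side_stationary[OF assms(1,3)] 3 assms distributions
      by (intro tendsto_wasserstein_one[where u = u]) auto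
    then show ?thesis by blast
  qed
qed

lemma tendsto_wasserstein_walks:
  assumes "u \<in> V" "v \<in> V" "0 \<le> \<alpha>" "\<alpha> \<le> \<beta>" "\<beta> < 1"
  shows "\<exists>L\<in>{0, 1 / 2, 1}.
    (\<lambda>k. wasserstein V E (walk_dist V E \<alpha> u k) (walk_dist V E \<beta> v k)) \<longlonglongrightarrow> L"
proof (cases "0 < \<alpha> \<or> \<not> bipartite")
  case True
  then have "(\<lambda>k. wasserstein V E (walk_dist V E \<alpha> u k) (walk_dist V E \<beta> v k)) \<longlonglongrightarrow> 0"
    using assms tendsto_walk_dist_stationary distribution_walk_dist distribution_stationary
    by (intro tendsto_wasserstein_0[where \<rho> = "\<lambda>_. stationary"]) auto
  then show ?thesis by blast
next
  case False
  then show ?thesis using tendsto_wasserstein_walks_bipartite assms by auto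
qed

end

section \<open>The one-vertex graph\<close>

lemma walk_dist_edgeless:
  assumes "\<And>a b. \<not> E a b"
  shows "walk_dist V E g x k = (\<lambda>y. if y = x then 1 else 0)"
proof -
  have "walk_step V E g \<mu> = \<mu>" for \<mu> using assms by (simp add: walk_step_def deg_def)
  then show ?thesis by (induction k) auto
qed

lemma wasserstein_singleton: "0 \<le> \<mu> x \<Longrightarrow> wasserstein {x} E \<mu> \<mu> = 0"
proof -
  assume "0 \<le> \<mu> x"
  then have "transport_plan {x} \<mu> \<mu> (\<lambda>_. \<mu> x)" by (simp add: transport_plan_def)
  then have "{(\<Sum>p\<in>{x} \<times> {x}. real (gdist E (fst p) (snd p)) * T p) | T. transport_plan {x} \<mu> \<mu> T} = {0}"
    by (auto simp: gdist_refl)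
  then show ?thesis by (simp add: wasserstein_def)
qed

lemma isolated_vertex_singleton:
  assumes "simple_graph V E" "connected_graph V E" "x \<in> V" "deg V E x = 0"
  shows "V = {x}" and "\<And>a b. \<not> E a b"
proof -
  have no_edge: "\<not> E x y" for y
  proof
    assume "E x y"
    then have "y \<in> {y \<in> V. E x y}" using assms(1) by (simp add: simple_graph_def)
    moreover have "finite {y \<in> V. E x y}" using assms(1) by (simp add: simple_graph_def)
    ultimately show False using assms(4) by (auto simp: deg_def)
  qed
  have "y = x" if y: "y \<in> V" for y
  proof -
    obtain n where walk: "(E ^^ n) x y" using assms(2,3) y by (auto simp: connected_graph_def)
    show ?thesis
    proof (cases n)
      case (Suc m)
      then show ?thesis using walk relpowp_Suc_D2[of m E x y] no_edge by auto
    qed (use walk in simp)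
  qed
  then show "V = {x}" using assms(3) by blast
  then show "\<not> E a b" for a b
    using assms(1) no_edge unfolding simple_graph_def by blast
qed

theorem corollary3p12:
  fixes V :: "'a set" and E :: "'a \<Rightarrow> 'a \<Rightarrow> bool" and u v :: 'a and \<alpha> \<beta> :: real
  assumes "simple_graph V E" and "connected_graph V E"
    and "u \<in> V" and "v \<in> V"
    and "0 \<le> \<alpha>" and "\<alpha> \<le> \<beta>" and "\<beta> \<le> 1"
  defines "W \<equiv> (\<lambda>k. wasserstein V E (walk_dist V E \<alpha> u k) (walk_dist V E \<beta> v k))"
  shows "let c1 = (W \<longlonglongrightarrow> 1 \<and> \<beta> < 1);
             c2 = (W \<longlonglongrightarrow> 1/2 \<and> \<beta> < 1);
             c3 = (W \<longlonglongrightarrow> 0 \<and> \<beta> < 1);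
             c4 = (\<beta> = 1)
         in (c1 \<and> \<not> c2 \<and> \<not> c3 \<and> \<not> c4) \<or> (\<not> c1 \<and> c2 \<and> \<not> c3 \<and> \<not> c4) \<or>
            (\<not> c1 \<and> \<not> c2 \<and> c3 \<and> \<not> c4) \<or> (\<not> c1 \<and> \<not> c2 \<and> \<not> c3 \<and> c4)"
proof (cases "\<beta> = 1")
  case True
  then show ?thesis unfolding Let_def by simp
next
  case False
  then have "\<beta> < 1" using assms(7) by simp
  obtain L where L: "L \<in> {0, 1 / 2, 1}" "W \<longlonglongrightarrow> L"
  proof (cases "\<forall>x\<in>V. 0 < deg V E x")
    case True
    then interpret nontrivial_connected_graph V E
      using assms(1,2) by unfold_locales auto
    show ?thesis
      using tendsto_wasserstein_walks[OF assms(3-6) \<open>\<beta> < 1\<close>] that unfolding W_def by blast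
  next
    case False
    then obtain x where "x \<in> V" "deg V E x = 0" by auto
    note singleton = isolated_vertex_singleton[OF assms(1,2) this]
    have "W = (\<lambda>_. 0)"
      using assms(3,4) singleton unfolding W_def by (simp add: walk_dist_edgeless wasserstein_singleton)
    then show ?thesis using that[of 0] by simp
  qed
  have limit_iff: "W \<longlonglongrightarrow> M \<longleftrightarrow> M = L" for M using L(2) LIMSEQ_unique by blast
  show ?thesis unfolding Let_def limit_iff using L(1) \<open>\<beta> < 1\<close> by auto
qed

end
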